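(* For every integer $i\ge 0$, the $i$th moment $\mathcal M(i)=\mathrm E[(I_K)^i]$ of $I_K=\sum_{k=1}^K\log_2(1+\gamma_k)$ equals $$\mathcal M(i)=\frac{i!}{1+\sum_{k=1}^K\frac{\lambda_k^2}{1-\lambda_k^2}}\sum_{\substack{i_1+\cdots+i_K=i\\ i_l\ge0}}\frac{1}{i_1!\cdots i_K!}\int_0^\infty e^{-t}\prod_{k=1}^K\left(\int_0^\infty e^{-y}\,\log_2^{i_k}(1+w_k y)\,{}_0F_1(;1;\varpi_k y t)\,dy\right)dt,$$ where $w_k=2g_k\sigma_k^2(1-\lambda_k^2)$ and $\varpi_k=\frac{\lambda_k^2}{1-\lambda_k^2}\left(1+\sum_{l=1}^K\frac{\lambda_l^2}{1-\lambda_l^2}\right)^{-1}$.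
   Context: Fix $K\ge 1$, $\sigma_1,\dots,\sigma_K>0$ and real $\lambda_1,\dots,\lambda_K$ with $|\lambda_k|<1$. Let ${}_0F_1(;1;z)=\sum_{n\ge0} z^n/(n!)^2$. The random vector $(|h_1|,\dots,|h_K|)$ of nonnegative channel amplitudes has joint PDF on $[0,\infty)^K$ $$f(x_1,\dots,x_K)=\prod_{k=1}^K\frac{1}{\sigma_k^2(1-\lambda_k^2)}\int_0^\infty e^{-\left(1+\sum_{k=1}^K\frac{\lambda_k^2}{1-\lambda_k^2}\right)t}\prod_{k=1}^K x_k\,e^{-\frac{x_k^2}{2\sigma_k^2(1-\lambda_k^2)}}\,{}_0F_1\!\left(;1;\frac{x_k^2\lambda_k^2 t}{2\sigma_k^2(1-\lambda_k^2)^2}\right)dt .$$ Fix constants $g_1,\dots,g_K>0$ (transmit SNRs) and set $\gamma_k=g_k|h_k|^2$. *)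

theory Defs
  imports "HOL-Analysis.Analysis" "HOL-Library.FuncSet"
begin

definition hyp0F1 :: "real \<Rightarrow> real" where
  "hyp0F1 z = (\<Sum>n. z ^ n / (fact n) ^ 2)"

text \<open>Channels are indexed by k in {..<K} (i.e. 0..K-1 instead of 1..K).
  The constant 1 + sum_k lambda_k^2/(1-lambda_k^2).\<close>
definition Sconst :: "nat \<Rightarrow> (nat \<Rightarrow> real) \<Rightarrow> real" where
  "Sconst K lam = 1 + (\<Sum>k<K. (lam k)\<^sup>2 / (1 - (lam k)\<^sup>2))"

text \<open>Joint PDF of (|h_1|,...,|h_K|) on [0,inf)^K.\<close>
definition jpdf :: "nat \<Rightarrow> (nat \<Rightarrow> real) \<Rightarrow> (nat \<Rightarrow> real) \<Rightarrow> (nat \<Rightarrow> real) \<Rightarrow> real" where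
  "jpdf K sig lam x =
     (\<Prod>k<K. 1 / ((sig k)\<^sup>2 * (1 - (lam k)\<^sup>2))) *
     (LBINT t:{0..}. exp (- Sconst K lam * t) *
        (\<Prod>k<K. x k * exp (- (x k)\<^sup>2 / (2 * (sig k)\<^sup>2 * (1 - (lam k)\<^sup>2)))
              * hyp0F1 ((x k)\<^sup>2 * (lam k)\<^sup>2 * t / (2 * (sig k)\<^sup>2 * (1 - (lam k)\<^sup>2)\<^sup>2))))"

definition sumrate :: "nat \<Rightarrow> (nat \<Rightarrow> real) \<Rightarrow> (nat \<Rightarrow> real) \<Rightarrow> real" where
  "sumrate K g x = (\<Sum>k<K. log 2 (1 + g k * (x k)\<^sup>2))"

definition moment :: "nat \<Rightarrow> (nat \<Rightarrow> real) \<Rightarrow> (nat \<Rightarrow> real) \<Rightarrow> (nat \<Rightarrow> real) \<Rightarrow> nat \<Rightarrow> real" where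
  "moment K sig lam g i =
     (LINT x:{x \<in> space (PiM {..<K} (\<lambda>_. lborel)). \<forall>k<K. 0 \<le> x k} | PiM {..<K} (\<lambda>_. lborel).
        (sumrate K g x) ^ i * jpdf K sig lam x)"

end

theory Submission
  imports Defs "HOL-Probability.Distributions"
begin

text \<open>
  Expanding \<open>I\<^sub>K\<^sup>i\<close> by the multinomial theorem reduces the moment to integrals of products of
  powers of \<open>log\<^sub>2 (1 + g\<^sub>k x\<^sub>k\<^sup>2)\<close> against the joint density. That density is a mixture over
  \<open>t\<close> of product densities, so by Tonelli the integral over the amplitudes factorises into
  one-dimensional integrals; the substitution \<open>y = x\<^sub>k\<^sup>2 / (2 \<sigma>\<^sub>k\<^sup>2 (1 - \<lambda>\<^sub>k\<^sup>2))\<close> turns each of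
  them into the inner integral of the formula, and rescaling \<open>t\<close> by
  \<open>1 + (\<Sum>l. \<lambda>\<^sub>l\<^sup>2 / (1 - \<lambda>\<^sub>l\<^sup>2))\<close> produces the factor in front. The computation is carried out
  with nonnegative integrals; the bound \<open>hyp0F1 (p * q) \<le> exp p * exp q\<close> shows that all of
  them are finite, which allows passing back to Lebesgue integrals.
\<close>

section \<open>The function \<open>hyp0F1\<close>\<close>

lemma power_div_fact_le_exp:
  fixes x :: real
  assumes "0 \<le> x"
  shows "x ^ n / fact n \<le> exp x"
proof -
  have "(\<Sum>m\<in>{n}. x ^ m / fact m) \<le> (\<Sum>m. x ^ m / fact m)"
    using assms summable_exp_generic[of x]
    by (intro sum_le_suminf) (auto simp: divide_inverse ac_simps)
  then show ?thesis by (simp add: exp_def divide_inverse ac_simps)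
qed

lemma summable_hyp0F1: "summable (\<lambda>n. z ^ n / (fact n)\<^sup>2 :: real)"
proof (rule summable_comparison_test_ev)
  show "summable (\<lambda>n. \<bar>z\<bar> ^ n / fact n)"
    using summable_exp_generic[of "\<bar>z\<bar>"] by (simp add: divide_inverse ac_simps)
  have "norm (z ^ n / (fact n)\<^sup>2) \<le> \<bar>z\<bar> ^ n / fact n" for n
  proof -
    have "norm (z ^ n / (fact n)\<^sup>2) = \<bar>z\<bar> ^ n / (fact n * fact n)"
      by (simp add: power2_eq_square power_abs)
    also have "\<dots> \<le> \<bar>z\<bar> ^ n / fact n"
      by (intro divide_left_mono) (auto simp: mult_le_cancel_left1)
    finally show ?thesis .
  qed
  then show "\<forall>\<^sub>F n in sequentially. norm (z ^ n / (fact n)\<^sup>2) \<le> \<bar>z\<bar> ^ n / fact n"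
    by simp
qed

lemma hyp0F1_nonneg: "0 \<le> z \<Longrightarrow> 0 \<le> hyp0F1 z"
  unfolding hyp0F1_def by (intro suminf_nonneg summable_hyp0F1) auto

lemma hyp0F1_mult_le_exp:
  assumes "0 \<le> p" "0 \<le> q"
  shows "hyp0F1 (p * q) \<le> exp p * exp q"
proof -
  have sp: "summable (\<lambda>n. p ^ n / fact n)"
    using summable_exp_generic[of p] by (simp add: divide_inverse ac_simps)
  have "hyp0F1 (p * q) = (\<Sum>n. (p ^ n / fact n) * (q ^ n / fact n))"
    by (simp add: hyp0F1_def power_mult_distrib power2_eq_square)
  also have "\<dots> \<le> (\<Sum>n. p ^ n / fact n * exp q)"
    using assms power_div_fact_le_exp[of q]
    by (intro suminf_le mult_left_mono summable_mult2[OF sp])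
      (auto intro: summable_hyp0F1[of "p * q", simplified power_mult_distrib power2_eq_square times_divide_times_eq])
  also have "\<dots> = (\<Sum>n. p ^ n / fact n) * exp q"
    by (rule suminf_mult2[OF sp, symmetric])
  also have "\<dots> = exp p * exp q"
    by (simp add: exp_def divide_inverse ac_simps)
  finally show ?thesis .
qed

lemma borel_measurable_hyp0F1 [measurable]: "hyp0F1 \<in> borel_measurable borel"
  unfolding hyp0F1_def[abs_def] by measurable

section \<open>Nonnegative integrals\<close>

lemma ennreal_times_indicator: "ennreal (a * indicator A x) = ennreal a * indicator A x"
  by (simp split: split_indicator)

lemma prod_indicator_eq_if:
  assumes "finite I"
  shows "(\<Prod>k\<in>I. indicator A (x k) :: 'a::comm_semiring_1) = (if \<forall>k\<in>I. x k \<in> A then 1 else 0)"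
  using assms by (induction I rule: finite_induct) auto

lemma ennreal_mult_prod:
  assumes "0 \<le> a" "\<And>k. k \<in> I \<Longrightarrow> 0 \<le> f k"
  shows "ennreal (a * (\<Prod>k\<in>I. f k)) = ennreal a * (\<Prod>k\<in>I. ennreal (f k))"
  using assms by (simp add: ennreal_mult prod_nonneg prod_ennreal)

lemma enn2real_prod: "enn2real (\<Prod>i\<in>A. f i) = (\<Prod>i\<in>A. enn2real (f i))"
  by (induction A rule: infinite_finite_induct) (auto simp: enn2real_mult)

lemma set_integral_eq_enn2real_nn_integral:
  fixes f :: "'a \<Rightarrow> real"
  assumes [measurable]: "f \<in> borel_measurable M" "A \<in> sets M"
    and nonneg: "\<And>x. x \<in> A \<Longrightarrow> 0 \<le> f x"
  shows "(LINT x:A|M. f x) = enn2real (\<integral>\<^sup>+x. ennreal (f x) * indicator A x \<partial>M)"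
proof -
  have "(LINT x:A|M. f x) = enn2real (\<integral>\<^sup>+x. ennreal (indicator A x * f x) \<partial>M)"
    unfolding set_lebesgue_integral_def using nonneg
    by (subst integral_eq_nn_integral) (auto split: split_indicator)
  then show ?thesis by (simp add: ennreal_times_indicator mult.commute)
qed

lemma nn_integral_exp_Ici:
  assumes "0 < (r::real)"
  shows "(\<integral>\<^sup>+x. ennreal (exp (- r * x)) * indicator {0..} x \<partial>lborel) = ennreal (1 / r)"
proof -
  have eq: "indicator {0..} (x / r) = (indicator {0..} x :: ennreal)" for x
    using assms by (simp add: field_simps split: split_indicator)
  have "(\<integral>\<^sup>+x. ennreal (exp (- r * x)) * indicator {0..} x \<partial>lborel)
     = ennreal (1 / r) * (\<integral>\<^sup>+x. ennreal (x ^ 0 * exp (- x)) * indicator {0..} x \<partial>lborel)"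
    using assms by (subst nn_integral_real_affine[where c="1 / r" and t=0]) (auto simp: eq)
  also have "\<dots> = ennreal (1 / r)"
    by (subst nn_intergal_power_times_exp_Ici) simp
  finally show ?thesis .
qed

lemma nn_integral_Ici_le_exp:
  fixes f :: "real \<Rightarrow> ennreal"
  assumes "0 < r" "0 \<le> B" and f: "\<And>t. 0 \<le> t \<Longrightarrow> f t \<le> ennreal (B * exp (- r * t))"
  shows "(\<integral>\<^sup>+t. f t * indicator {0..} t \<partial>lborel) \<le> ennreal (B / r)"
proof -
  have "(\<integral>\<^sup>+t. f t * indicator {0..} t \<partial>lborel)
      \<le> (\<integral>\<^sup>+t. ennreal B * (ennreal (exp (- r * t)) * indicator {0..} t) \<partial>lborel)"
    using assms(2) f by (intro nn_integral_mono) (auto simp: ennreal_mult split: split_indicator)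
  also have "\<dots> = ennreal B * (\<integral>\<^sup>+t. ennreal (exp (- r * t)) * indicator {0..} t \<partial>lborel)"
    by (rule nn_integral_cmult) measurable
  also have "\<dots> = ennreal B * ennreal (1 / r)"
    by (simp only: nn_integral_exp_Ici[OF assms(1)])
  also have "\<dots> = ennreal (B / r)"
    using assms by (simp add: ennreal_mult[symmetric])
  finally show ?thesis .
qed

lemma nn_integral_Ici_rescale:
  fixes f :: "real \<Rightarrow> ennreal"
  assumes "0 < c" and [measurable]: "f \<in> borel_measurable borel"
  shows "(\<integral>\<^sup>+t. f t * indicator {0..} t \<partial>lborel)
       = ennreal (1 / c) * (\<integral>\<^sup>+s. f (s / c) * indicator {0..} s \<partial>lborel)"
proof -
  have "indicator {0..} (s / c) = (indicator {0..} s :: ennreal)" for s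
    using assms(1) by (simp add: field_simps split: split_indicator)
  then show ?thesis
    using assms(1) by (subst nn_integral_real_affine[where c="1 / c" and t=0]) auto
qed

lemma nn_integral_Ici_eq_SUP:
  fixes h :: "nat \<Rightarrow> real" and f :: "real \<Rightarrow> ennreal"
  assumes "incseq h" and unbounded: "\<And>x. \<exists>n. x \<le> h n"
    and [measurable]: "f \<in> borel_measurable borel"
  shows "(\<integral>\<^sup>+x. f x * indicator {0..} x \<partial>lborel)
       = (SUP n. \<integral>\<^sup>+x. f x * indicator {0..h n} x \<partial>lborel)"
proof -
  have "(SUP n. f x * indicator {0..h n} x) = f x * indicator {0..} x" for x
  proof (rule antisym)
    show "(SUP n. f x * indicator {0..h n} x) \<le> f x * indicator {0..} x"
      by (intro SUP_least mult_left_mono) (auto split: split_indicator)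
    obtain n where "x \<le> h n" using unbounded by blast
    then have "f x * indicator {0..} x = f x * indicator {0..h n} x"
      by (simp split: split_indicator)
    also have "\<dots> \<le> (SUP n. f x * indicator {0..h n} x)"
      by (rule SUP_upper) simp
    finally show "f x * indicator {0..} x \<le> (SUP n. f x * indicator {0..h n} x)" .
  qed
  then have "(\<integral>\<^sup>+x. f x * indicator {0..} x \<partial>lborel)
      = (\<integral>\<^sup>+x. (SUP n. f x * indicator {0..h n} x) \<partial>lborel)"
    by simp
  also have "\<dots> = (SUP n. \<integral>\<^sup>+x. f x * indicator {0..h n} x \<partial>lborel)"
  proof (rule nn_integral_monotone_convergence_SUP)
    show "incseq (\<lambda>n x. f x * indicator {0..h n} x)"
      using \<open>incseq h\<close> by (intro incseq_SucI le_funI mult_left_mono)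
        (auto simp: incseq_Suc_iff split: split_indicator intro: order_trans)
  qed simp
  finally show ?thesis .
qed

lemma nn_integral_Ici_substitution_square:
  fixes f :: "real \<Rightarrow> real"
  assumes "0 < \<beta>" and [measurable]: "f \<in> borel_measurable borel"
  shows "(\<integral>\<^sup>+y. ennreal (f y) * indicator {0..} y \<partial>lborel)
       = (\<integral>\<^sup>+x. ennreal (f (x\<^sup>2 / (2 * \<beta>)) * (x / \<beta>)) * indicator {0..} x \<partial>lborel)"
proof -
  define q where "q x = x\<^sup>2 / (2 * \<beta>)" for x :: real
  have on_interval: "(\<integral>\<^sup>+y. ennreal (f y) * indicator {0..q (real n)} y \<partial>lborel)
        = (\<integral>\<^sup>+x. ennreal (f (q x) * (x / \<beta>)) * indicator {0..real n} x \<partial>lborel)" for n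
  proof -
    have "(\<integral>\<^sup>+y. ennreal (f y * indicator {q 0..q (real n)} y) \<partial>lborel)
        = (\<integral>\<^sup>+x. ennreal (f (q x) * (x / \<beta>) * indicator {0..real n} x) \<partial>lborel)"
      using assms(1) unfolding q_def
      by (intro nn_integral_substitution)
        (auto intro!: derivative_eq_intros continuous_intros
          simp: set_borel_measurable_def field_simps power2_eq_square)
    moreover have "q 0 = 0" by (simp add: q_def)
    ultimately show ?thesis
      by (simp only: ennreal_times_indicator)
  qed
  have inc: "incseq (\<lambda>n. q (real n))"
    using assms(1) by (intro incseq_SucI) (auto simp: q_def intro!: divide_right_mono power_mono)
  have unbounded: "\<exists>n. x \<le> q (real n)" for x
  proof -
    obtain n :: nat where n: "max 1 (2 * \<beta> * x) \<le> real n" using real_arch_simple by blast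
    then have "real n \<le> (real n)\<^sup>2" by (simp add: power2_eq_square)
    with n have "2 * \<beta> * x \<le> (real n)\<^sup>2" by linarith
    then have "x \<le> q (real n)" using assms(1) by (simp add: q_def field_simps)
    then show ?thesis ..
  qed
  have "(\<integral>\<^sup>+y. ennreal (f y) * indicator {0..} y \<partial>lborel)
      = (SUP n. \<integral>\<^sup>+y. ennreal (f y) * indicator {0..q (real n)} y \<partial>lborel)"
    by (rule nn_integral_Ici_eq_SUP[OF inc unbounded]) measurable
  also have "\<dots> = (SUP n. \<integral>\<^sup>+x. ennreal (f (q x) * (x / \<beta>)) * indicator {0..real n} x \<partial>lborel)"
    by (simp only: on_interval)
  also have "\<dots> = (\<integral>\<^sup>+x. ennreal (f (q x) * (x / \<beta>)) * indicator {0..} x \<partial>lborel)"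
    using real_arch_simple unfolding q_def
    by (intro nn_integral_Ici_eq_SUP[symmetric]) (auto simp: incseq_def)
  finally show ?thesis by (simp only: q_def)
qed

section \<open>The multinomial theorem\<close>

lemma multinomial_theorem:
  fixes a :: "'k \<Rightarrow> 'a :: field_char_0"
  assumes "finite A"
  shows "(\<Sum>k\<in>A. a k) ^ i = (\<Sum>c\<in>{c \<in> A \<rightarrow>\<^sub>E {..i}. (\<Sum>k\<in>A. c k) = i}.
            fact i / (\<Prod>k\<in>A. fact (c k)) * (\<Prod>k\<in>A. a k ^ c k))"
  using assms
proof (induction A arbitrary: i rule: finite_induct)
  case empty
  show ?case by (cases i) (auto simp: PiE_empty_domain)
next
  case (insert x F)
  let ?C = "\<lambda>A i. {c \<in> A \<rightarrow>\<^sub>E {..i}. (\<Sum>k\<in>A. c k) = i}"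
  let ?t = "\<lambda>A i c. fact i / (\<Prod>k\<in>A. fact (c k)) * (\<Prod>k\<in>A. a k ^ c k)"
  have "(\<Sum>k\<in>insert x F. a k) ^ i = (\<Sum>j\<le>i. of_nat (i choose j) * a x ^ j * (\<Sum>k\<in>F. a k) ^ (i - j))"
    using insert by (simp add: binomial_ring)
  also have "\<dots> = (\<Sum>j\<le>i. \<Sum>c\<in>?C F (i - j). of_nat (i choose j) * a x ^ j * ?t F (i - j) c)"
    by (simp add: insert.IH sum_distrib_left)
  also have "\<dots> = (\<Sum>(j, c)\<in>Sigma {..i} (\<lambda>j. ?C F (i - j)). of_nat (i choose j) * a x ^ j * ?t F (i - j) c)"
    by (subst sum.Sigma) (auto intro!: finite_PiE insert.hyps)
  also have "\<dots> = (\<Sum>c\<in>?C (insert x F) i. ?t (insert x F) i c)"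
  proof (rule sum.reindex_bij_witness[where i = "\<lambda>c. (c x, restrict c F)" and j = "\<lambda>(j, c). c(x := j)"])
    fix p assume p: "p \<in> Sigma {..i} (\<lambda>j. ?C F (i - j))"
    obtain j c where pj: "p = (j, c)" by fastforce
    from p pj have j: "j \<le> i" and c: "c \<in> F \<rightarrow>\<^sub>E {..i - j}" and cs: "(\<Sum>k\<in>F. c k) = i - j"
      by auto
    have on_F: "(\<Sum>k\<in>F. (c(x := j)) k) = (\<Sum>k\<in>F. c k)"
      "(\<Prod>k\<in>F. fact ((c(x := j)) k) :: 'a) = (\<Prod>k\<in>F. fact (c k))"
      "(\<Prod>k\<in>F. a k ^ (c(x := j)) k) = (\<Prod>k\<in>F. a k ^ c k)"
      using insert.hyps by (auto intro!: sum.cong prod.cong)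
    show "((case p of (j, c) \<Rightarrow> c(x := j)) x, restrict (case p of (j, c) \<Rightarrow> c(x := j)) F) = p"
      using pj c insert.hyps by (auto simp: restrict_def fun_eq_iff PiE_def extensional_def)
    show "(case p of (j, c) \<Rightarrow> c(x := j)) \<in> ?C (insert x F) i"
      using pj c j cs insert.hyps on_F by (auto simp: PiE_def extensional_def Pi_def)
    have "of_nat (i choose j) * a x ^ j * ?t F (i - j) c = ?t (insert x F) i (c(x := j))"
      using insert.hyps j on_F by (simp add: binomial_fact field_simps of_nat_diff)
    then show "?t (insert x F) i (case p of (j, c) \<Rightarrow> c(x := j))
        = (case p of (j, c) \<Rightarrow> of_nat (i choose j) * a x ^ j * ?t F (i - j) c)"
      using pj by simp
  next
    fix c assume c: "c \<in> ?C (insert x F) i"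
    have sum: "c x + (\<Sum>k\<in>F. c k) = i" using c insert.hyps by auto
    have "(\<Sum>k\<in>F. restrict c F k) = (\<Sum>k\<in>F. c k)" by (intro sum.cong) auto
    moreover have "c k \<le> i - c x" if "k \<in> F" for k
      using sum insert.hyps member_le_sum[of k F c] that by fastforce
    ultimately show "(c x, restrict c F) \<in> Sigma {..i} (\<lambda>j. ?C F (i - j))"
      using sum by (auto simp: PiE_def Pi_def)
    show "(case (c x, restrict c F) of (j, c') \<Rightarrow> c'(x := j)) = c"
      using c by (auto simp: fun_eq_iff restrict_def PiE_def extensional_def)
  qed
  finally show ?case .
qed

section \<open>The rate integral\<close>

lemma log2_one_plus_nonneg: "0 \<le> (z::real) \<Longrightarrow> 0 \<le> log 2 (1 + z)"
  by simp

lemma log2_one_plus_power_le_exp: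
  assumes "0 \<le> w" "0 \<le> y" "0 < \<epsilon>"
  shows "(log 2 (1 + w * y)) ^ n \<le> (w / (\<epsilon> * ln 2)) ^ n * fact n * exp (\<epsilon> * y)"
proof -
  have "log 2 (1 + w * y) \<le> w * y / ln 2"
    using ln_add_one_self_le_self[of "w * y"] assms by (simp add: log_def divide_right_mono)
  then have "(log 2 (1 + w * y)) ^ n \<le> ((w / (\<epsilon> * ln 2)) * (\<epsilon> * y)) ^ n"
    using assms log2_one_plus_nonneg[of "w * y"] by (intro power_mono) (simp_all add: field_simps)
  also have "\<dots> = (w / (\<epsilon> * ln 2)) ^ n * (\<epsilon> * y) ^ n"
    by (rule power_mult_distrib)
  also have "\<dots> \<le> (w / (\<epsilon> * ln 2)) ^ n * (fact n * exp (\<epsilon> * y))"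
    using power_div_fact_le_exp[of "\<epsilon> * y" n] assms
    by (intro mult_left_mono) (simp_all add: pos_divide_le_eq ac_simps)
  finally show ?thesis by (simp add: mult.assoc)
qed

definition rate_integral :: "real \<Rightarrow> real \<Rightarrow> nat \<Rightarrow> real \<Rightarrow> ennreal" where
  "rate_integral w r n t =
     (\<integral>\<^sup>+y. ennreal (exp (- y) * (log 2 (1 + w * y)) ^ n * hyp0F1 (r * y * t)) * indicator {0..} y \<partial>lborel)"

lemma borel_measurable_rate_integral [measurable]: "rate_integral w r n \<in> borel_measurable borel"
  unfolding rate_integral_def[abs_def] by measurable

lemma rate_integral_rescale: "rate_integral w r n (t / c) = rate_integral w (r / c) n t"
  by (simp add: rate_integral_def)

lemma rate_integral_le:
  assumes "0 \<le> w" "0 \<le> r" "0 \<le> t" "0 < \<epsilon>" "0 < \<eta>" "\<epsilon> + \<eta> < 1"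
  shows "rate_integral w r n t
      \<le> ennreal ((w / (\<epsilon> * ln 2)) ^ n * fact n / (1 - \<epsilon> - \<eta>) * exp (r * t / \<eta>))"
proof -
  define C where "C = (w / (\<epsilon> * ln 2)) ^ n * fact n * exp (r * t / \<eta>)"
  have "exp (- y) * (log 2 (1 + w * y)) ^ n * hyp0F1 (r * y * t) \<le> C * exp (- (1 - \<epsilon> - \<eta>) * y)"
    if "0 \<le> y" for y
  proof -
    have "hyp0F1 (r * y * t) = hyp0F1 ((\<eta> * y) * (r * t / \<eta>))"
      using assms by (simp add: field_simps)
    also have "\<dots> \<le> exp (\<eta> * y) * exp (r * t / \<eta>)"
      using assms that by (intro hyp0F1_mult_le_exp) auto
    finally have "exp (- y) * (log 2 (1 + w * y)) ^ n * hyp0F1 (r * y * t)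
        \<le> exp (- y) * ((w / (\<epsilon> * ln 2)) ^ n * fact n * exp (\<epsilon> * y)) * (exp (\<eta> * y) * exp (r * t / \<eta>))"
      using assms that log2_one_plus_power_le_exp[of w y \<epsilon> n]
      by (intro mult_mono mult_left_mono hyp0F1_nonneg) auto
    also have "\<dots> = C * exp (- (1 - \<epsilon> - \<eta>) * y)"
      by (simp add: C_def algebra_simps flip: exp_add)
    finally show ?thesis .
  qed
  then have "rate_integral w r n t \<le> ennreal (C / (1 - \<epsilon> - \<eta>))"
    unfolding rate_integral_def using assms
    by (intro nn_integral_Ici_le_exp ennreal_leI) (auto simp: C_def)
  then show ?thesis by (simp add: C_def field_simps)
qed

lemma rate_integral_finite:
  assumes "0 \<le> w" "0 \<le> r" "0 \<le> t"
  shows "rate_integral w r n t < \<infinity>"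
  using rate_integral_le[of w r t "1/4" "1/4" n] assms
  by (simp add: le_less_trans)

lemma nn_integral_rate_product_finite:
  assumes "finite A" and w: "\<And>k. k \<in> A \<Longrightarrow> 0 \<le> w k" and r: "\<And>k. k \<in> A \<Longrightarrow> 0 \<le> r k"
    and "(\<Sum>k\<in>A. r k) < 1"
  shows "(\<integral>\<^sup>+s. ennreal (exp (- s)) * (\<Prod>k\<in>A. rate_integral (w k) (r k) (n k) s) * indicator {0..} s \<partial>lborel)
       < \<infinity>"
proof -
  define \<rho> where "\<rho> = (\<Sum>k\<in>A. r k)"
  \<comment> \<open>With \<open>\<eta> > \<rho>\<close> the growth \<open>exp (\<rho> * s / \<eta>)\<close> of the \<open>hyp0F1\<close> factors is beaten by \<open>exp (- s)\<close>.\<close>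
  define \<eta> where "\<eta> = (1 + \<rho>) / 2"
  define \<epsilon> where "\<epsilon> = (1 - \<rho>) / 4"
  define M where "M k = (w k / (\<epsilon> * ln 2)) ^ n k * fact (n k) / (1 - \<epsilon> - \<eta>)" for k
  have "0 \<le> \<rho>" using r by (simp add: \<rho>_def sum_nonneg)
  then have \<epsilon>\<eta>: "0 < \<epsilon>" "0 < \<eta>" "\<epsilon> + \<eta> < 1" "\<rho> < \<eta>"
    using assms(4) by (simp_all add: \<epsilon>_def \<eta>_def \<rho>_def field_simps)
  have M: "0 \<le> M k" if "k \<in> A" for k
    using \<epsilon>\<eta> w[OF that] by (simp add: M_def)
  have "ennreal (exp (- s)) * (\<Prod>k\<in>A. rate_integral (w k) (r k) (n k) s)
      \<le> ennreal ((\<Prod>k\<in>A. M k) * exp (- (1 - \<rho> / \<eta>) * s))" if "0 \<le> s" for s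
  proof -
    have "(\<Prod>k\<in>A. rate_integral (w k) (r k) (n k) s) \<le> (\<Prod>k\<in>A. ennreal (M k * exp (r k * s / \<eta>)))"
      using \<epsilon>\<eta> w r that unfolding M_def by (intro prod_mono_ennreal rate_integral_le) auto
    also have "\<dots> = ennreal ((\<Prod>k\<in>A. M k) * exp (\<rho> * s / \<eta>))"
      using M assms(1)
      by (simp add: prod_ennreal prod.distrib exp_sum \<rho>_def sum_distrib_right sum_divide_distrib)
    finally have "ennreal (exp (- s)) * (\<Prod>k\<in>A. rate_integral (w k) (r k) (n k) s)
        \<le> ennreal (exp (- s)) * ennreal ((\<Prod>k\<in>A. M k) * exp (\<rho> * s / \<eta>))"
      by (rule mult_left_mono) simp
    also have "\<dots> = ennreal ((\<Prod>k\<in>A. M k) * (exp (- s) * exp (\<rho> * s / \<eta>)))"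
      using M by (simp add: ennreal_mult[symmetric] prod_nonneg mult.left_commute)
    also have "exp (- s) * exp (\<rho> * s / \<eta>) = exp (- (1 - \<rho> / \<eta>) * s)"
      using \<epsilon>\<eta> by (simp add: field_simps flip: exp_add)
    finally show ?thesis .
  qed
  then have "(\<integral>\<^sup>+s. ennreal (exp (- s)) * (\<Prod>k\<in>A. rate_integral (w k) (r k) (n k) s) * indicator {0..} s \<partial>lborel)
      \<le> ennreal ((\<Prod>k\<in>A. M k) / (1 - \<rho> / \<eta>))"
    using \<epsilon>\<eta> M by (intro nn_integral_Ici_le_exp prod_nonneg) auto
  then show ?thesis by (simp add: le_less_trans)
qed

lemma set_integral_rate_product:
  assumes "finite A" and w: "\<And>k. k \<in> A \<Longrightarrow> 0 \<le> w k" and r: "\<And>k. k \<in> A \<Longrightarrow> 0 \<le> r k"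
  shows "(LBINT t:{0..}. exp (- t) *
            (\<Prod>k\<in>A. LBINT y:{0..}. exp (- y) * (log 2 (1 + w k * y)) ^ n k * hyp0F1 (r k * y * t)))
       = enn2real (\<integral>\<^sup>+t. ennreal (exp (- t)) * (\<Prod>k\<in>A. rate_integral (w k) (r k) (n k) t) * indicator {0..} t \<partial>lborel)"
proof -
  have inner: "(LBINT y:{0..}. exp (- y) * (log 2 (1 + w k * y)) ^ n k * hyp0F1 (r k * y * t))
      = enn2real (rate_integral (w k) (r k) (n k) t)" if "k \<in> A" "0 \<le> t" for k t
    unfolding rate_integral_def using w[OF that(1)] r[OF that(1)] that(2)
    by (intro set_integral_eq_enn2real_nn_integral)
      (auto intro!: mult_nonneg_nonneg zero_le_power log2_one_plus_nonneg hyp0F1_nonneg)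
  have "(LBINT t:{0..}. exp (- t) *
            (\<Prod>k\<in>A. LBINT y:{0..}. exp (- y) * (log 2 (1 + w k * y)) ^ n k * hyp0F1 (r k * y * t)))
      = (LBINT t:{0..}. enn2real (ennreal (exp (- t)) * (\<Prod>k\<in>A. rate_integral (w k) (r k) (n k) t)))"
    by (intro set_lebesgue_integral_cong) (auto simp: inner enn2real_mult enn2real_prod)
  also have "\<dots> = enn2real (\<integral>\<^sup>+t. ennreal (enn2real (ennreal (exp (- t))
      * (\<Prod>k\<in>A. rate_integral (w k) (r k) (n k) t))) * indicator {0..} t \<partial>lborel)"
    by (rule set_integral_eq_enn2real_nn_integral) auto
  also have "\<dots> = enn2real (\<integral>\<^sup>+t. ennreal (exp (- t)) * (\<Prod>k\<in>A. rate_integral (w k) (r k) (n k) t) * indicator {0..} t \<partial>lborel)"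
  proof (intro arg_cong[where f=enn2real] nn_integral_cong)
    fix t :: real
    have "(\<Prod>k\<in>A. rate_integral (w k) (r k) (n k) t) < \<infinity>" if "0 \<le> t"
      using rate_integral_finite w r that
      unfolding infinity_ennreal_def less_top[symmetric] ennreal_prod_eq_top by fastforce
    then show "ennreal (enn2real (ennreal (exp (- t)) * (\<Prod>k\<in>A. rate_integral (w k) (r k) (n k) t))) * indicator {0..} t
        = ennreal (exp (- t)) * (\<Prod>k\<in>A. rate_integral (w k) (r k) (n k) t) * indicator {0..} t"
      by (simp add: ennreal_mult_less_top split: split_indicator)
  qed
  finally show ?thesis .
qed

section \<open>Integrating out the amplitudes\<close>

lemma nn_integral_PiM_Ici_exchange:
  fixes u :: "real \<Rightarrow> ennreal" and \<phi> :: "'i \<Rightarrow> real \<Rightarrow> real \<Rightarrow> ennreal"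
  assumes "finite I" and [measurable]: "u \<in> borel_measurable borel"
    and [measurable]: "\<And>k. (\<lambda>(y, t). \<phi> k y t) \<in> borel_measurable (borel \<Otimes>\<^sub>M borel)"
  shows "(\<integral>\<^sup>+x. (\<integral>\<^sup>+t. u t * (\<Prod>k\<in>I. \<phi> k (x k) t) * indicator {0..} t \<partial>lborel)
              * (\<Prod>k\<in>I. indicator {0..} (x k)) \<partial>PiM I (\<lambda>_. lborel))
       = (\<integral>\<^sup>+t. u t * (\<Prod>k\<in>I. \<integral>\<^sup>+y. \<phi> k y t * indicator {0..} y \<partial>lborel) * indicator {0..} t \<partial>lborel)"
proof -
  let ?M = "PiM I (\<lambda>_. lborel :: real measure)"
  interpret P: product_sigma_finite "\<lambda>_::'i. lborel :: real measure" by standard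
  interpret Ms: sigma_finite_measure ?M by (rule P.sigma_finite) (rule assms(1))
  interpret pair_sigma_finite ?M "lborel :: real measure" by unfold_locales
  have "(\<integral>\<^sup>+x. (\<integral>\<^sup>+t. u t * (\<Prod>k\<in>I. \<phi> k (x k) t) * indicator {0..} t \<partial>lborel)
              * (\<Prod>k\<in>I. indicator {0..} (x k)) \<partial>?M)
      = (\<integral>\<^sup>+x. (\<integral>\<^sup>+t. u t * indicator {0..} t * (\<Prod>k\<in>I. \<phi> k (x k) t * indicator {0..} (x k)) \<partial>lborel) \<partial>?M)"
    by (intro nn_integral_cong, subst nn_integral_multc[symmetric])
      (measurable, simp add: prod.distrib mult_ac)
  also have "\<dots> = (\<integral>\<^sup>+t. (\<integral>\<^sup>+x. u t * indicator {0..} t * (\<Prod>k\<in>I. \<phi> k (x k) t * indicator {0..} (x k)) \<partial>?M) \<partial>lborel)"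
    by (rule Fubini'[symmetric]) measurable
  also have "\<dots> = (\<integral>\<^sup>+t. u t * indicator {0..} t * (\<integral>\<^sup>+x. (\<Prod>k\<in>I. \<phi> k (x k) t * indicator {0..} (x k)) \<partial>?M) \<partial>lborel)"
    by (intro nn_integral_cong nn_integral_cmult) measurable
  also have "\<dots> = (\<integral>\<^sup>+t. u t * (\<Prod>k\<in>I. \<integral>\<^sup>+y. \<phi> k y t * indicator {0..} y \<partial>lborel) * indicator {0..} t \<partial>lborel)"
  proof (intro nn_integral_cong)
    fix t :: real
    have "(\<integral>\<^sup>+x. (\<Prod>k\<in>I. \<phi> k (x k) t * indicator {0..} (x k)) \<partial>?M)
        = (\<Prod>k\<in>I. \<integral>\<^sup>+y. \<phi> k y t * indicator {0..} y \<partial>lborel)"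
      by (rule P.product_nn_integral_prod[OF assms(1)]) measurable
    then show "u t * indicator {0..} t * (\<integral>\<^sup>+x. (\<Prod>k\<in>I. \<phi> k (x k) t * indicator {0..} (x k)) \<partial>?M)
        = u t * (\<Prod>k\<in>I. \<integral>\<^sup>+y. \<phi> k y t * indicator {0..} y \<partial>lborel) * indicator {0..} t"
      by (simp add: mult_ac)
  qed
  finally show ?thesis .
qed

definition amplitude_kernel :: "real \<Rightarrow> real \<Rightarrow> real \<Rightarrow> real \<Rightarrow> real" where
  "amplitude_kernel s l x t = x * exp (- x\<^sup>2 / (2 * s\<^sup>2 * (1 - l\<^sup>2)))
     * hyp0F1 (x\<^sup>2 * l\<^sup>2 * t / (2 * s\<^sup>2 * (1 - l\<^sup>2)\<^sup>2)) / (s\<^sup>2 * (1 - l\<^sup>2))"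

lemma borel_measurable_amplitude_kernel [measurable (raw)]:
  assumes [measurable]: "f \<in> borel_measurable M" "h \<in> borel_measurable M"
  shows "(\<lambda>x. amplitude_kernel s l (f x) (h x)) \<in> borel_measurable M"
  unfolding amplitude_kernel_def by measurable

lemma amplitude_kernel_nonneg:
  assumes "\<bar>l\<bar> < 1" "0 \<le> x" "0 \<le> t"
  shows "0 \<le> amplitude_kernel s l x t"
  using assms unfolding amplitude_kernel_def
  by (auto intro!: mult_nonneg_nonneg divide_nonneg_nonneg hyp0F1_nonneg simp: abs_square_less_1 less_imp_le)

lemma amplitude_kernel_le_exp:
  assumes "\<bar>l\<bar> < 1" "0 \<le> x" "0 < m"
  obtains B where "0 \<le> B" "\<And>t. 0 \<le> t \<Longrightarrow> amplitude_kernel s l x t \<le> B * exp (t / m)"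
proof
  define z where "z = x\<^sup>2 * l\<^sup>2 / (2 * s\<^sup>2 * (1 - l\<^sup>2)\<^sup>2)"
  define B where "B = x * exp (- x\<^sup>2 / (2 * s\<^sup>2 * (1 - l\<^sup>2))) * exp (m * z) / (s\<^sup>2 * (1 - l\<^sup>2))"
  have "l\<^sup>2 < 1" using assms(1) by (simp add: abs_square_less_1)
  then show "0 \<le> B" using assms(2) by (simp add: B_def)
  fix t :: real assume "0 \<le> t"
  have "hyp0F1 (x\<^sup>2 * l\<^sup>2 * t / (2 * s\<^sup>2 * (1 - l\<^sup>2)\<^sup>2)) = hyp0F1 ((m * z) * (t / m))"
    using assms(3) by (simp add: z_def ac_simps)
  also have "\<dots> \<le> exp (m * z) * exp (t / m)"
    using assms \<open>0 \<le> t\<close> by (intro hyp0F1_mult_le_exp) (auto simp: z_def)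
  finally show "amplitude_kernel s l x t \<le> B * exp (t / m)"
    using \<open>l\<^sup>2 < 1\<close> assms(2) unfolding amplitude_kernel_def B_def
    by (auto intro!: divide_right_mono mult_left_mono simp: mult.assoc)
qed

lemma rate_integral_substitution:
  assumes "0 < s" "\<bar>l\<bar> < 1"
  shows "(\<integral>\<^sup>+x. ennreal ((log 2 (1 + \<gamma> * x\<^sup>2)) ^ n * amplitude_kernel s l x t) * indicator {0..} x \<partial>lborel)
       = rate_integral (2 * \<gamma> * s\<^sup>2 * (1 - l\<^sup>2)) (l\<^sup>2 / (1 - l\<^sup>2)) n t"
proof -
  define a where "a = s\<^sup>2 * (1 - l\<^sup>2)"
  have "0 < 1 - l\<^sup>2" using assms(2) by (simp add: abs_square_less_1)
  then have "0 < a" using assms(1) by (simp add: a_def)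
  define f where "f y = exp (- y) * (log 2 (1 + 2 * \<gamma> * s\<^sup>2 * (1 - l\<^sup>2) * y)) ^ n
      * hyp0F1 (l\<^sup>2 / (1 - l\<^sup>2) * y * t)" for y
  have e1: "- x\<^sup>2 / (2 * s\<^sup>2 * (1 - l\<^sup>2)) = - (x\<^sup>2 / (2 * a))" for x
    by (simp add: a_def mult.assoc)
  have e2: "2 * \<gamma> * s\<^sup>2 * (1 - l\<^sup>2) * (x\<^sup>2 / (2 * a)) = \<gamma> * x\<^sup>2" for x
  proof -
    have "2 * \<gamma> * s\<^sup>2 * (1 - l\<^sup>2) * (x\<^sup>2 / (2 * a)) = (2 * \<gamma> * a) * (x\<^sup>2 / (2 * a))"
      by (simp add: a_def mult.assoc)
    then show ?thesis using \<open>0 < a\<close> by simp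
  qed
  have e3: "l\<^sup>2 / (1 - l\<^sup>2) * (x\<^sup>2 / (2 * a)) * t = x\<^sup>2 * l\<^sup>2 * t / (2 * s\<^sup>2 * (1 - l\<^sup>2)\<^sup>2)" for x
    using \<open>0 < a\<close> \<open>0 < 1 - l\<^sup>2\<close> unfolding a_def by (simp add: field_simps power2_eq_square)
  have pointwise: "f (x\<^sup>2 / (2 * a)) * (x / a) = (log 2 (1 + \<gamma> * x\<^sup>2)) ^ n * amplitude_kernel s l x t" for x
    unfolding f_def amplitude_kernel_def e1 e2 e3 a_def[symmetric] by (simp add: field_simps)
  have "rate_integral (2 * \<gamma> * s\<^sup>2 * (1 - l\<^sup>2)) (l\<^sup>2 / (1 - l\<^sup>2)) n t
      = (\<integral>\<^sup>+y. ennreal (f y) * indicator {0..} y \<partial>lborel)"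
    by (simp add: rate_integral_def f_def)
  also have "\<dots> = (\<integral>\<^sup>+x. ennreal (f (x\<^sup>2 / (2 * a)) * (x / a)) * indicator {0..} x \<partial>lborel)"
    by (rule nn_integral_Ici_substitution_square[OF \<open>0 < a\<close>]) (simp add: f_def)
  finally show ?thesis by (simp only: pointwise)
qed

section \<open>Moments of the sum rate\<close>

lemma jpdf_eq_set_integral:
  "jpdf K sig lam x
     = (LBINT t:{0..}. exp (- Sconst K lam * t) * (\<Prod>k<K. amplitude_kernel (sig k) (lam k) (x k) t))"
proof -
  have factor_in: "(\<Prod>k<K. 1 / a k) * (e * (\<Prod>k<K. b k)) = e * (\<Prod>k<K. b k / a k)"
    for e :: real and a b :: "nat \<Rightarrow> real"
    by (simp add: prod_dividef)
  show ?thesis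
    unfolding jpdf_def amplitude_kernel_def set_integral_mult_right[symmetric] factor_in by (rule refl)
qed

locale channel_model =
  fixes K :: nat and sig lam g :: "nat \<Rightarrow> real"
  assumes sig_pos: "\<And>k. k < K \<Longrightarrow> 0 < sig k"
    and abs_lam_less_1: "\<And>k. k < K \<Longrightarrow> \<bar>lam k\<bar> < 1"
    and snr_pos: "\<And>k. k < K \<Longrightarrow> 0 < g k"
begin

lemma lam_sq_less_1: "k < K \<Longrightarrow> (lam k)\<^sup>2 < 1"
  using abs_lam_less_1 by (simp add: abs_square_less_1)

lemma Sconst_ge_1: "1 \<le> Sconst K lam"
  unfolding Sconst_def by (auto intro!: sum_nonneg divide_nonneg_nonneg less_imp_le[OF lam_sq_less_1])

lemma sum_rate_weights_less_1: "(\<Sum>k<K. (lam k)\<^sup>2 / (1 - (lam k)\<^sup>2) / Sconst K lam) < 1"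
proof -
  have "(\<Sum>k<K. (lam k)\<^sup>2 / (1 - (lam k)\<^sup>2) / Sconst K lam) = (Sconst K lam - 1) / Sconst K lam"
    by (simp add: Sconst_def sum_divide_distrib)
  then show ?thesis using Sconst_ge_1 by simp
qed

lemma amplitude_integral_finite:
  assumes "\<forall>k<K. 0 \<le> x k"
  shows "(\<integral>\<^sup>+t. ennreal (exp (- Sconst K lam * t))
            * (\<Prod>k<K. ennreal (amplitude_kernel (sig k) (lam k) (x k) t)) * indicator {0..} t \<partial>lborel) < \<infinity>"
proof -
  have "\<exists>B\<ge>0. \<forall>t\<ge>0. amplitude_kernel (sig k) (lam k) (x k) t \<le> B * exp (t / (real K + 1))"
    if k: "k < K" for k
  proof -
    obtain B where "0 \<le> B" "\<And>t. 0 \<le> t \<Longrightarrow> amplitude_kernel (sig k) (lam k) (x k) t \<le> B * exp (t / (real K + 1))"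
      using amplitude_kernel_le_exp[of "lam k" "x k" "real K + 1"] abs_lam_less_1[OF k] assms k by auto
    then show ?thesis by blast
  qed
  then obtain B where B: "\<And>k. k < K \<Longrightarrow> 0 \<le> B k"
    and amplitude_le: "\<And>k t. k < K \<Longrightarrow> 0 \<le> t \<Longrightarrow> amplitude_kernel (sig k) (lam k) (x k) t \<le> B k * exp (t / (real K + 1))"
    by metis
  \<comment> \<open>Each channel grows at most like \<open>exp (t / (K + 1))\<close>, and \<open>K / (K + 1) < 1 \<le> Sconst K lam\<close>.\<close>
  define r where "r = Sconst K lam - K / (real K + 1)"
  have "K / (real K + 1) < 1" by (simp add: field_simps)
  then have "0 < r" using Sconst_ge_1 unfolding r_def by linarith
  have nonneg: "0 \<le> amplitude_kernel (sig k) (lam k) (x k) t" if "k < K" "0 \<le> t" for k t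
    using abs_lam_less_1 assms that by (intro amplitude_kernel_nonneg) auto
  have "ennreal (exp (- Sconst K lam * t)) * (\<Prod>k<K. ennreal (amplitude_kernel (sig k) (lam k) (x k) t))
      \<le> ennreal ((\<Prod>k<K. B k) * exp (- r * t))" if "0 \<le> t" for t
  proof -
    have "(\<Prod>k<K. amplitude_kernel (sig k) (lam k) (x k) t) \<le> (\<Prod>k<K. B k * exp (t / (real K + 1)))"
      using nonneg amplitude_le that by (intro prod_mono) auto
    also have "\<dots> = (\<Prod>k<K. B k) * exp (t / (real K + 1)) ^ K"
      by (simp add: prod.distrib)
    also have "exp (t / (real K + 1)) ^ K = exp (K * (t / (real K + 1)))"
      by (rule exp_of_nat_mult[symmetric])
    finally have "exp (- Sconst K lam * t) * (\<Prod>k<K. amplitude_kernel (sig k) (lam k) (x k) t)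
        \<le> (\<Prod>k<K. B k) * (exp (- Sconst K lam * t) * exp (K * (t / (real K + 1))))"
      by (simp add: mult.left_commute)
    also have "exp (- Sconst K lam * t) * exp (K * (t / (real K + 1))) = exp (- r * t)"
      by (simp add: r_def algebra_simps flip: exp_add)
    finally show ?thesis
      using nonneg that by (subst ennreal_mult_prod[symmetric]) (auto intro: ennreal_leI)
  qed
  then have "(\<integral>\<^sup>+t. ennreal (exp (- Sconst K lam * t))
      * (\<Prod>k<K. ennreal (amplitude_kernel (sig k) (lam k) (x k) t)) * indicator {0..} t \<partial>lborel)
      \<le> ennreal ((\<Prod>k<K. B k) / r)"
    using \<open>0 < r\<close> B by (intro nn_integral_Ici_le_exp prod_nonneg) auto
  then show ?thesis by (simp add: le_less_trans)
qed

lemma ennreal_jpdf: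
  assumes "\<forall>k<K. 0 \<le> x k"
  shows "ennreal (jpdf K sig lam x)
       = (\<integral>\<^sup>+t. ennreal (exp (- Sconst K lam * t))
            * (\<Prod>k<K. ennreal (amplitude_kernel (sig k) (lam k) (x k) t)) * indicator {0..} t \<partial>lborel)"
proof -
  have nonneg: "0 \<le> amplitude_kernel (sig k) (lam k) (x k) t" if "k < K" "0 \<le> t" for k t
    using abs_lam_less_1 assms that by (intro amplitude_kernel_nonneg) auto
  have "jpdf K sig lam x = enn2real (\<integral>\<^sup>+t. ennreal (exp (- Sconst K lam * t)
      * (\<Prod>k<K. amplitude_kernel (sig k) (lam k) (x k) t)) * indicator {0..} t \<partial>lborel)"
    unfolding jpdf_eq_set_integral using nonneg
    by (intro set_integral_eq_enn2real_nn_integral) (auto intro!: mult_nonneg_nonneg prod_nonneg)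
  also have "(\<integral>\<^sup>+t. ennreal (exp (- Sconst K lam * t)
      * (\<Prod>k<K. amplitude_kernel (sig k) (lam k) (x k) t)) * indicator {0..} t \<partial>lborel)
    = (\<integral>\<^sup>+t. ennreal (exp (- Sconst K lam * t))
      * (\<Prod>k<K. ennreal (amplitude_kernel (sig k) (lam k) (x k) t)) * indicator {0..} t \<partial>lborel)"
  proof (intro nn_integral_cong)
    fix t :: real
    show "ennreal (exp (- Sconst K lam * t) * (\<Prod>k<K. amplitude_kernel (sig k) (lam k) (x k) t))
        * indicator {0..} t = ennreal (exp (- Sconst K lam * t))
        * (\<Prod>k<K. ennreal (amplitude_kernel (sig k) (lam k) (x k) t)) * indicator {0..} t"
    proof (cases "0 \<le> t")
      case True
      then show ?thesis using nonneg by (subst ennreal_mult_prod) auto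
    qed simp
  qed
  finally show ?thesis using amplitude_integral_finite[OF assms] by simp
qed

lemma moment_eq_nn_integral:
  "moment K sig lam g i = enn2real (\<integral>\<^sup>+x. ennreal (sumrate K g x ^ i * jpdf K sig lam x)
      * (\<Prod>k<K. indicator {0..} (x k)) \<partial>PiM {..<K} (\<lambda>_. lborel))"
proof -
  let ?M = "PiM {..<K} (\<lambda>_. lborel :: real measure)"
  let ?D = "{x \<in> space ?M. \<forall>k<K. 0 \<le> x k}"
  have [measurable]: "sumrate K g \<in> borel_measurable ?M" "jpdf K sig lam \<in> borel_measurable ?M"
    unfolding sumrate_def[abs_def] jpdf_eq_set_integral[abs_def] set_lebesgue_integral_def by measurable
  have "0 \<le> sumrate K g x" for x
    unfolding sumrate_def using snr_pos by (intro sum_nonneg log2_one_plus_nonneg) (simp add: less_imp_le)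
  moreover have "0 \<le> jpdf K sig lam x" if "\<forall>k<K. 0 \<le> x k" for x
    unfolding jpdf_eq_set_integral set_lebesgue_integral_def using that abs_lam_less_1
    by (intro Bochner_Integration.integral_nonneg)
      (auto simp: indicator_def intro!: mult_nonneg_nonneg prod_nonneg amplitude_kernel_nonneg)
  ultimately have "moment K sig lam g i = enn2real (\<integral>\<^sup>+x. ennreal (sumrate K g x ^ i * jpdf K sig lam x)
      * indicator ?D x \<partial>?M)"
    unfolding moment_def by (intro set_integral_eq_enn2real_nn_integral) auto
  also have "(\<integral>\<^sup>+x. ennreal (sumrate K g x ^ i * jpdf K sig lam x) * indicator ?D x \<partial>?M)
      = (\<integral>\<^sup>+x. ennreal (sumrate K g x ^ i * jpdf K sig lam x) * (\<Prod>k<K. indicator {0..} (x k)) \<partial>?M)"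
    by (intro nn_integral_cong) (auto simp: prod_indicator_eq_if split: split_indicator)
  finally show ?thesis .
qed

lemma ennreal_sumrate_power:
  "ennreal (sumrate K g x ^ i)
     = (\<Sum>c\<in>{c \<in> {..<K} \<rightarrow>\<^sub>E {..i}. (\<Sum>k<K. c k) = i}.
          ennreal (fact i / (\<Prod>k<K. fact (c k))) * (\<Prod>k<K. ennreal ((log 2 (1 + g k * (x k)\<^sup>2)) ^ c k)))"
proof -
  have nonneg: "0 \<le> (log 2 (1 + g k * (x k)\<^sup>2)) ^ n" if "k < K" for k n
    using snr_pos[OF that] by (intro zero_le_power log2_one_plus_nonneg) simp
  have coef: "0 \<le> fact i / (\<Prod>k<K. fact (c k) :: real)" for c
    by (simp add: prod_nonneg)
  have "ennreal (sumrate K g x ^ i) = ennreal (\<Sum>c\<in>{c \<in> {..<K} \<rightarrow>\<^sub>E {..i}. (\<Sum>k<K. c k) = i}.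
      fact i / (\<Prod>k<K. fact (c k)) * (\<Prod>k<K. (log 2 (1 + g k * (x k)\<^sup>2)) ^ c k))"
    unfolding sumrate_def multinomial_theorem[OF finite_lessThan] ..
  also have "\<dots> = (\<Sum>c\<in>{c \<in> {..<K} \<rightarrow>\<^sub>E {..i}. (\<Sum>k<K. c k) = i}.
      ennreal (fact i / (\<Prod>k<K. fact (c k)) * (\<Prod>k<K. (log 2 (1 + g k * (x k)\<^sup>2)) ^ c k)))"
    using nonneg coef by (intro sum_ennreal[symmetric] mult_nonneg_nonneg prod_nonneg) auto
  also have "\<dots> = (\<Sum>c\<in>{c \<in> {..<K} \<rightarrow>\<^sub>E {..i}. (\<Sum>k<K. c k) = i}.
      ennreal (fact i / (\<Prod>k<K. fact (c k))) * (\<Prod>k<K. ennreal ((log 2 (1 + g k * (x k)\<^sup>2)) ^ c k)))"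
    using nonneg coef by (intro sum.cong refl ennreal_mult_prod) auto
  finally show ?thesis .
qed

lemma moment_integrand_expansion:
  "ennreal (sumrate K g x ^ i * jpdf K sig lam x) * (\<Prod>k<K. indicator {0..} (x k))
   = (\<Sum>c\<in>{c \<in> {..<K} \<rightarrow>\<^sub>E {..i}. (\<Sum>k<K. c k) = i}. ennreal (fact i / (\<Prod>k<K. fact (c k))) *
        ((\<integral>\<^sup>+t. ennreal (exp (- Sconst K lam * t)) * (\<Prod>k<K. ennreal ((log 2 (1 + g k * (x k)\<^sup>2)) ^ c k
              * amplitude_kernel (sig k) (lam k) (x k) t)) * indicator {0..} t \<partial>lborel)
          * (\<Prod>k<K. indicator {0..} (x k))))"
proof (cases "\<forall>k<K. 0 \<le> x k")
  case True
  have rate_nonneg: "0 \<le> (log 2 (1 + g k * (x k)\<^sup>2)) ^ n" if "k < K" for k n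
    using snr_pos[OF that] by (intro zero_le_power log2_one_plus_nonneg) simp
  have "0 \<le> sumrate K g x ^ i"
    unfolding sumrate_def using rate_nonneg[of _ 1] by (intro zero_le_power sum_nonneg) auto
  then have "ennreal (sumrate K g x ^ i * jpdf K sig lam x) = ennreal (sumrate K g x ^ i) * ennreal (jpdf K sig lam x)"
    by (rule ennreal_mult')
  also have "\<dots> = (\<Sum>c\<in>{c \<in> {..<K} \<rightarrow>\<^sub>E {..i}. (\<Sum>k<K. c k) = i}. ennreal (fact i / (\<Prod>k<K. fact (c k))) *
      ((\<Prod>k<K. ennreal ((log 2 (1 + g k * (x k)\<^sup>2)) ^ c k)) * (\<integral>\<^sup>+t. ennreal (exp (- Sconst K lam * t))
        * (\<Prod>k<K. ennreal (amplitude_kernel (sig k) (lam k) (x k) t)) * indicator {0..} t \<partial>lborel)))"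
    unfolding ennreal_sumrate_power ennreal_jpdf[OF True] by (simp add: sum_distrib_right mult.assoc)
  also have "\<dots> = (\<Sum>c\<in>{c \<in> {..<K} \<rightarrow>\<^sub>E {..i}. (\<Sum>k<K. c k) = i}. ennreal (fact i / (\<Prod>k<K. fact (c k))) *
      (\<integral>\<^sup>+t. ennreal (exp (- Sconst K lam * t)) * (\<Prod>k<K. ennreal ((log 2 (1 + g k * (x k)\<^sup>2)) ^ c k
        * amplitude_kernel (sig k) (lam k) (x k) t)) * indicator {0..} t \<partial>lborel))"
  proof (intro sum.cong refl arg_cong2[where f="(*)"])
    fix c :: "nat \<Rightarrow> nat"
    have "(\<Prod>k<K. ennreal ((log 2 (1 + g k * (x k)\<^sup>2)) ^ c k)) * (\<integral>\<^sup>+t. ennreal (exp (- Sconst K lam * t))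
        * (\<Prod>k<K. ennreal (amplitude_kernel (sig k) (lam k) (x k) t)) * indicator {0..} t \<partial>lborel)
      = (\<integral>\<^sup>+t. (\<Prod>k<K. ennreal ((log 2 (1 + g k * (x k)\<^sup>2)) ^ c k)) * (ennreal (exp (- Sconst K lam * t))
        * (\<Prod>k<K. ennreal (amplitude_kernel (sig k) (lam k) (x k) t)) * indicator {0..} t) \<partial>lborel)"
      by (rule nn_integral_cmult[symmetric]) measurable
    also have "\<dots> = (\<integral>\<^sup>+t. ennreal (exp (- Sconst K lam * t)) * (\<Prod>k<K. ennreal ((log 2 (1 + g k * (x k)\<^sup>2)) ^ c k
        * amplitude_kernel (sig k) (lam k) (x k) t)) * indicator {0..} t \<partial>lborel)"
    proof (intro nn_integral_cong)
      fix t :: real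
      have "(\<Prod>k<K. ennreal ((log 2 (1 + g k * (x k)\<^sup>2)) ^ c k * amplitude_kernel (sig k) (lam k) (x k) t))
          = (\<Prod>k<K. ennreal ((log 2 (1 + g k * (x k)\<^sup>2)) ^ c k))
            * (\<Prod>k<K. ennreal (amplitude_kernel (sig k) (lam k) (x k) t))"
        using rate_nonneg by (simp add: ennreal_mult' prod.distrib)
      then show "(\<Prod>k<K. ennreal ((log 2 (1 + g k * (x k)\<^sup>2)) ^ c k)) * (ennreal (exp (- Sconst K lam * t))
          * (\<Prod>k<K. ennreal (amplitude_kernel (sig k) (lam k) (x k) t)) * indicator {0..} t)
        = ennreal (exp (- Sconst K lam * t)) * (\<Prod>k<K. ennreal ((log 2 (1 + g k * (x k)\<^sup>2)) ^ c k
          * amplitude_kernel (sig k) (lam k) (x k) t)) * indicator {0..} t"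
        by (simp add: mult_ac)
    qed
    finally show "(\<Prod>k<K. ennreal ((log 2 (1 + g k * (x k)\<^sup>2)) ^ c k)) * (\<integral>\<^sup>+t. ennreal (exp (- Sconst K lam * t))
        * (\<Prod>k<K. ennreal (amplitude_kernel (sig k) (lam k) (x k) t)) * indicator {0..} t \<partial>lborel)
      = (\<integral>\<^sup>+t. ennreal (exp (- Sconst K lam * t)) * (\<Prod>k<K. ennreal ((log 2 (1 + g k * (x k)\<^sup>2)) ^ c k
        * amplitude_kernel (sig k) (lam k) (x k) t)) * indicator {0..} t \<partial>lborel)" .
  qed
  finally show ?thesis using True by (simp add: prod_indicator_eq_if)
next
  case False
  then show ?thesis by (auto simp: prod_indicator_eq_if)
qed

lemma nn_integral_moment_expansion:
  "(\<integral>\<^sup>+x. ennreal (sumrate K g x ^ i * jpdf K sig lam x) * (\<Prod>k<K. indicator {0..} (x k)) \<partial>PiM {..<K} (\<lambda>_. lborel))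
   = (\<Sum>c\<in>{c \<in> {..<K} \<rightarrow>\<^sub>E {..i}. (\<Sum>k<K. c k) = i}. ennreal (fact i / (\<Prod>k<K. fact (c k)) / Sconst K lam) *
       (\<integral>\<^sup>+s. ennreal (exp (- s)) * (\<Prod>k<K. rate_integral (2 * g k * (sig k)\<^sup>2 * (1 - (lam k)\<^sup>2))
          ((lam k)\<^sup>2 / (1 - (lam k)\<^sup>2) / Sconst K lam) (c k) s) * indicator {0..} s \<partial>lborel))"
proof -
  let ?M = "PiM {..<K} (\<lambda>_. lborel :: real measure)"
  let ?C = "{c \<in> {..<K} \<rightarrow>\<^sub>E {..i}. (\<Sum>k<K. c k) = i}"
  define Q where "Q c x = (\<integral>\<^sup>+t. ennreal (exp (- Sconst K lam * t)) * (\<Prod>k<K. ennreal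
      ((log 2 (1 + g k * (x k)\<^sup>2)) ^ c k * amplitude_kernel (sig k) (lam k) (x k) t)) * indicator {0..} t \<partial>lborel)"
    for c and x :: "nat \<Rightarrow> real"
  define J where "J c = (\<integral>\<^sup>+s. ennreal (exp (- s)) * (\<Prod>k<K. rate_integral (2 * g k * (sig k)\<^sup>2 * (1 - (lam k)\<^sup>2))
      ((lam k)\<^sup>2 / (1 - (lam k)\<^sup>2) / Sconst K lam) (c k) s) * indicator {0..} s \<partial>lborel)" for c
  have [measurable]: "Q c \<in> borel_measurable ?M" for c
    unfolding Q_def by measurable
  have "0 < Sconst K lam" using Sconst_ge_1 by simp
  have per_index: "(\<integral>\<^sup>+x. Q c x * (\<Prod>k<K. indicator {0..} (x k)) \<partial>?M) = ennreal (1 / Sconst K lam) * J c" for c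
  proof -
    have "(\<integral>\<^sup>+x. Q c x * (\<Prod>k<K. indicator {0..} (x k)) \<partial>?M)
      = (\<integral>\<^sup>+t. ennreal (exp (- Sconst K lam * t)) * (\<Prod>k<K. \<integral>\<^sup>+y. ennreal ((log 2 (1 + g k * y\<^sup>2)) ^ c k
        * amplitude_kernel (sig k) (lam k) y t) * indicator {0..} y \<partial>lborel) * indicator {0..} t \<partial>lborel)"
      unfolding Q_def by (rule nn_integral_PiM_Ici_exchange) measurable
    also have "\<dots> = (\<integral>\<^sup>+t. ennreal (exp (- Sconst K lam * t)) * (\<Prod>k<K. rate_integral (2 * g k * (sig k)\<^sup>2 * (1 - (lam k)\<^sup>2))
          ((lam k)\<^sup>2 / (1 - (lam k)\<^sup>2)) (c k) t) * indicator {0..} t \<partial>lborel)"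
      using sig_pos abs_lam_less_1
      by (intro nn_integral_cong arg_cong2[where f="(*)"] refl prod.cong rate_integral_substitution) auto
    also have "\<dots> = ennreal (1 / Sconst K lam) * (\<integral>\<^sup>+s. ennreal (exp (- Sconst K lam * (s / Sconst K lam)))
        * (\<Prod>k<K. rate_integral (2 * g k * (sig k)\<^sup>2 * (1 - (lam k)\<^sup>2))
          ((lam k)\<^sup>2 / (1 - (lam k)\<^sup>2)) (c k) (s / Sconst K lam)) * indicator {0..} s \<partial>lborel)"
      by (rule nn_integral_Ici_rescale[OF \<open>0 < Sconst K lam\<close>]) measurable
    finally show ?thesis
      using \<open>0 < Sconst K lam\<close> by (simp add: J_def rate_integral_rescale)
  qed
  have "(\<integral>\<^sup>+x. ennreal (sumrate K g x ^ i * jpdf K sig lam x) * (\<Prod>k<K. indicator {0..} (x k)) \<partial>?M)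
      = (\<Sum>c\<in>?C. \<integral>\<^sup>+x. ennreal (fact i / (\<Prod>k<K. fact (c k))) * (Q c x * (\<Prod>k<K. indicator {0..} (x k))) \<partial>?M)"
    unfolding moment_integrand_expansion Q_def[symmetric] by (rule nn_integral_sum) measurable
  also have "\<dots> = (\<Sum>c\<in>?C. ennreal (fact i / (\<Prod>k<K. fact (c k))) * (ennreal (1 / Sconst K lam) * J c))"
  proof (intro sum.cong refl)
    fix c :: "nat \<Rightarrow> nat"
    have "(\<integral>\<^sup>+x. ennreal (fact i / (\<Prod>k<K. fact (c k))) * (Q c x * (\<Prod>k<K. indicator {0..} (x k))) \<partial>?M)
        = ennreal (fact i / (\<Prod>k<K. fact (c k))) * (\<integral>\<^sup>+x. Q c x * (\<Prod>k<K. indicator {0..} (x k)) \<partial>?M)"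
      by (rule nn_integral_cmult) measurable
    then show "(\<integral>\<^sup>+x. ennreal (fact i / (\<Prod>k<K. fact (c k))) * (Q c x * (\<Prod>k<K. indicator {0..} (x k))) \<partial>?M)
        = ennreal (fact i / (\<Prod>k<K. fact (c k))) * (ennreal (1 / Sconst K lam) * J c)"
      by (simp only: per_index)
  qed
  finally show ?thesis
    unfolding J_def using \<open>0 < Sconst K lam\<close>
    by (simp add: ennreal_mult'[symmetric] mult.assoc[symmetric] prod_nonneg)
qed

end

theorem mainTheorem3:
  fixes K :: nat and sig lam g :: "nat \<Rightarrow> real" and i :: nat
  assumes "K \<ge> 1"
    and "\<And>k. k < K \<Longrightarrow> sig k > 0"
    and "\<And>k. k < K \<Longrightarrow> \<bar>lam k\<bar> < 1"
    and "\<And>k. k < K \<Longrightarrow> g k > 0"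
  shows "moment K sig lam g i =
    fact i / Sconst K lam *
    (\<Sum>c\<in>{c \<in> {..<K} \<rightarrow>\<^sub>E {..i}. (\<Sum>k<K. c k) = i}.
       (1 / (\<Prod>k<K. fact (c k))) *
       (LBINT t:{0..}. exp (- t) *
          (\<Prod>k<K. LBINT y:{0..}. exp (- y)
              * (log 2 (1 + 2 * g k * (sig k)\<^sup>2 * (1 - (lam k)\<^sup>2) * y)) ^ (c k)
              * hyp0F1 ((lam k)\<^sup>2 / (1 - (lam k)\<^sup>2) / Sconst K lam * y * t))))"
proof -
  interpret channel_model K sig lam g
    using assms(2-4) by unfold_locales
  define w where "w k = 2 * g k * (sig k)\<^sup>2 * (1 - (lam k)\<^sup>2)" for k
  define r where "r k = (lam k)\<^sup>2 / (1 - (lam k)\<^sup>2) / Sconst K lam" for k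
  define J where "J c = (\<integral>\<^sup>+s. ennreal (exp (- s)) * (\<Prod>k<K. rate_integral (w k) (r k) (c k) s)
      * indicator {0..} s \<partial>lborel)" for c
  have nonneg: "0 \<le> w k" "0 \<le> r k" if "k < K" for k
    using snr_pos[OF that] lam_sq_less_1[OF that] Sconst_ge_1 by (simp_all add: w_def r_def)
  have "J c < \<infinity>" for c
    unfolding J_def r_def using nonneg sum_rate_weights_less_1
    by (intro nn_integral_rate_product_finite) (auto simp: r_def)
  have rhs: "enn2real (J c) = (LBINT t:{0..}. exp (- t) *
          (\<Prod>k<K. LBINT y:{0..}. exp (- y)
              * (log 2 (1 + 2 * g k * (sig k)\<^sup>2 * (1 - (lam k)\<^sup>2) * y)) ^ (c k)
              * hyp0F1 ((lam k)\<^sup>2 / (1 - (lam k)\<^sup>2) / Sconst K lam * y * t)))" for c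
    unfolding J_def using nonneg
    by (subst set_integral_rate_product) (auto simp: w_def r_def)
  have "moment K sig lam g i = enn2real (\<Sum>c\<in>{c \<in> {..<K} \<rightarrow>\<^sub>E {..i}. (\<Sum>k<K. c k) = i}.
      ennreal (fact i / (\<Prod>k<K. fact (c k)) / Sconst K lam) * J c)"
    unfolding moment_eq_nn_integral nn_integral_moment_expansion J_def w_def r_def ..
  also have "\<dots> = (\<Sum>c\<in>{c \<in> {..<K} \<rightarrow>\<^sub>E {..i}. (\<Sum>k<K. c k) = i}.
      fact i / (\<Prod>k<K. fact (c k)) / Sconst K lam * enn2real (J c))"
    using \<open>\<And>c. J c < \<infinity>\<close> Sconst_ge_1
    by (simp add: enn2real_sum enn2real_mult ennreal_mult_less_top prod_nonneg)
  also have "\<dots> = fact i / Sconst K lam * (\<Sum>c\<in>{c \<in> {..<K} \<rightarrow>\<^sub>E {..i}. (\<Sum>k<K. c k) = i}.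
      1 / (\<Prod>k<K. fact (c k)) * enn2real (J c))"
    by (simp add: sum_distrib_left mult.commute[of "Sconst K lam"])
  finally show ?thesis
    by (simp only: rhs)
qed

end
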